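(* Let $\mathfrak g$ be a nonsemisimple complex Lie algebra, $\mathfrak p$ a nonperfect ideal of $\mathfrak g$, and $\phi:\mathfrak p\to\mathbb C$ a Lie algebra homomorphism. Then every nonzero $\mathfrak p$-invariant subspace $M$ of $W(\phi)$ contains a nonzero vector $v$ with $pv=\phi(p)v$ for all $p\in\mathfrak p$.
   Context: A Lie algebra homomorphism $\phi:\mathfrak p\to\mathbb C$ is a linear map vanishing on $[\mathfrak p,\mathfrak p]$. Let $\mathbb C w_\phi$ be the one-dimensional $\mathfrak p$-module with $pw_\phi=\phi(p)w_\phi$, and $W(\phi)=\mathcal U(\mathfrak g)\otimes_{\mathcal U(\mathfrak p)}\mathbb C w_\phi$. *)

theory Defs
  imports Complex_Main
begin

locale lie_algebra = vector_space scale
  for scale :: "complex \<Rightarrow> 'g::ab_group_add \<Rightarrow> 'g" +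
  fixes br :: "'g \<Rightarrow> 'g \<Rightarrow> 'g"
  assumes br_add_left: "br (x + y) z = br x z + br y z"
    and br_add_right: "br x (y + z) = br x y + br x z"
    and br_scale_left: "br (scale c x) y = scale c (br x y)"
    and br_scale_right: "br x (scale c y) = scale c (br x y)"
    and br_alt: "br x x = 0"
    and jacobi: "br x (br y z) + br y (br z x) + br z (br x y) = 0"

definition fin_dim :: "(complex \<Rightarrow> 'g::ab_group_add \<Rightarrow> 'g) \<Rightarrow> bool" where
  "fin_dim scale \<longleftrightarrow> (\<exists>B. finite B \<and> module.span scale B = UNIV)"

definition brset :: "('g \<Rightarrow> 'g \<Rightarrow> 'g) \<Rightarrow> 'g set \<Rightarrow> 'g set \<Rightarrow> 'g set" where
  "brset br A B = {br x y | x y. x \<in> A \<and> y \<in> B}"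

definition lie_bracket_space ::
  "(complex \<Rightarrow> 'g::ab_group_add \<Rightarrow> 'g) \<Rightarrow> ('g \<Rightarrow> 'g \<Rightarrow> 'g) \<Rightarrow> 'g set \<Rightarrow> 'g set \<Rightarrow> 'g set" where
  "lie_bracket_space scale br A B = module.span scale (brset br A B)"

definition lie_ideal ::
  "(complex \<Rightarrow> 'g::ab_group_add \<Rightarrow> 'g) \<Rightarrow> ('g \<Rightarrow> 'g \<Rightarrow> 'g) \<Rightarrow> 'g set \<Rightarrow> bool" where
  "lie_ideal scale br I \<longleftrightarrow> module.subspace scale I \<and> (\<forall>x y. y \<in> I \<longrightarrow> br x y \<in> I)"

fun derived_series ::
  "(complex \<Rightarrow> 'g::ab_group_add \<Rightarrow> 'g) \<Rightarrow> ('g \<Rightarrow> 'g \<Rightarrow> 'g) \<Rightarrow> 'g set \<Rightarrow> nat \<Rightarrow> 'g set" where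
  "derived_series scale br I 0 = I"
| "derived_series scale br I (Suc n) =
     lie_bracket_space scale br (derived_series scale br I n) (derived_series scale br I n)"

definition solvable_ideal ::
  "(complex \<Rightarrow> 'g::ab_group_add \<Rightarrow> 'g) \<Rightarrow> ('g \<Rightarrow> 'g \<Rightarrow> 'g) \<Rightarrow> 'g set \<Rightarrow> bool" where
  "solvable_ideal scale br I \<longleftrightarrow> lie_ideal scale br I \<and> (\<exists>n. derived_series scale br I n = {0})"

definition semisimple_lie ::
  "(complex \<Rightarrow> 'g::ab_group_add \<Rightarrow> 'g) \<Rightarrow> ('g \<Rightarrow> 'g \<Rightarrow> 'g) \<Rightarrow> bool" where
  "semisimple_lie scale br \<longleftrightarrow> (\<forall>I. solvable_ideal scale br I \<longrightarrow> I = {0})"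

definition perfect_ideal ::
  "(complex \<Rightarrow> 'g::ab_group_add \<Rightarrow> 'g) \<Rightarrow> ('g \<Rightarrow> 'g \<Rightarrow> 'g) \<Rightarrow> 'g set \<Rightarrow> bool" where
  "perfect_ideal scale br P \<longleftrightarrow> lie_bracket_space scale br P P = P"

text \<open>Lie algebra homomorphism P \<rightarrow> C: linear on P, vanishing on [P,P].\<close>
definition lie_char ::
  "(complex \<Rightarrow> 'g::ab_group_add \<Rightarrow> 'g) \<Rightarrow> ('g \<Rightarrow> 'g \<Rightarrow> 'g) \<Rightarrow> 'g set \<Rightarrow> ('g \<Rightarrow> complex) \<Rightarrow> bool" where
  "lie_char scale br P \<phi> \<longleftrightarrow>
     (\<forall>x\<in>P. \<forall>y\<in>P. \<phi> (x + y) = \<phi> x + \<phi> y)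
   \<and> (\<forall>c. \<forall>x\<in>P. \<phi> (scale c x) = c * \<phi> x)
   \<and> (\<forall>x\<in>lie_bracket_space scale br P P. \<phi> x = 0)"

text \<open>Elements: finitely supported functions on words; product = concatenation convolution.\<close>
type_synonym 'g fa = "'g list \<Rightarrow> complex"

definition fa_elems :: "'g fa set" where
  "fa_elems = {f. finite {xs. f xs \<noteq> 0}}"

definition fa_zero :: "'g fa" where "fa_zero = (\<lambda>_. 0)"
definition fa_one :: "'g fa" where "fa_one = (\<lambda>xs. if xs = [] then 1 else 0)"
definition fa_gen :: "'g \<Rightarrow> 'g fa" where "fa_gen x = (\<lambda>xs. if xs = [x] then 1 else 0)"
definition fa_add :: "'g fa \<Rightarrow> 'g fa \<Rightarrow> 'g fa" where "fa_add f h = (\<lambda>xs. f xs + h xs)"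
definition fa_diff :: "'g fa \<Rightarrow> 'g fa \<Rightarrow> 'g fa" where "fa_diff f h = (\<lambda>xs. f xs - h xs)"
definition fa_smul :: "complex \<Rightarrow> 'g fa \<Rightarrow> 'g fa" where "fa_smul c f = (\<lambda>xs. c * f xs)"
definition fa_mult :: "'g fa \<Rightarrow> 'g fa \<Rightarrow> 'g fa" where
  "fa_mult f h = (\<lambda>zs. \<Sum>i\<le>length zs. f (take i zs) * h (drop i zs))"

text \<open>Defining relations of U(g) as a quotient of the free algebra on g.\<close>
definition U_rels ::
  "(complex \<Rightarrow> 'g::ab_group_add \<Rightarrow> 'g) \<Rightarrow> ('g \<Rightarrow> 'g \<Rightarrow> 'g) \<Rightarrow> 'g fa set" where
  "U_rels scale br =
     {fa_diff (fa_gen (x + y)) (fa_add (fa_gen x) (fa_gen y)) | x y. True}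
   \<union> {fa_diff (fa_gen (scale c x)) (fa_smul c (fa_gen x)) | c x. True}
   \<union> {fa_diff (fa_diff (fa_mult (fa_gen x) (fa_gen y)) (fa_mult (fa_gen y) (fa_gen x)))
              (fa_gen (br x y)) | x y. True}"

text \<open>Kernel of the surjection  FreeAlg(g) \<rightarrow> U(g) \<rightarrow> W(phi) = U(g) \<otimes>_{U(p)} C w_phi = U(g)/U(g){p - phi(p)}:
  the two-sided ideal generated by U_rels plus the left ideal generated by p - phi(p).\<close>
inductive_set W_ker ::
  "(complex \<Rightarrow> 'g::ab_group_add \<Rightarrow> 'g) \<Rightarrow> ('g \<Rightarrow> 'g \<Rightarrow> 'g) \<Rightarrow> 'g set \<Rightarrow> ('g \<Rightarrow> complex) \<Rightarrow> 'g fa set"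
  for scale br P \<phi> where
  zero: "fa_zero \<in> W_ker scale br P \<phi>"
| add: "a \<in> W_ker scale br P \<phi> \<Longrightarrow> b \<in> W_ker scale br P \<phi> \<Longrightarrow> fa_add a b \<in> W_ker scale br P \<phi>"
| smul: "a \<in> W_ker scale br P \<phi> \<Longrightarrow> fa_smul c a \<in> W_ker scale br P \<phi>"
| rel: "r \<in> U_rels scale br \<Longrightarrow> a \<in> fa_elems \<Longrightarrow> b \<in> fa_elems \<Longrightarrow>
        fa_mult (fa_mult a r) b \<in> W_ker scale br P \<phi>"
| ind: "p \<in> P \<Longrightarrow> a \<in> fa_elems \<Longrightarrow>
        fa_mult a (fa_diff (fa_gen p) (fa_smul (\<phi> p) fa_one)) \<in> W_ker scale br P \<phi>"

end

theory Submission
  imports Defs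
begin

text \<open>
  Filter \<open>W(\<phi>)\<close> by the images of the words of length \<open>< n\<close>. Because \<open>\<mathfrak>p\<close> is an ideal,
  the relation \<open>q x = x q - [x, q]\<close> in \<open>U(\<mathfrak>g)\<close> lets one move \<open>q \<in> \<mathfrak>p\<close> through a word
  step by step until it hits \<open>w\<^sub>\<phi>\<close>, where it acts by \<open>\<phi>(q)\<close>; hence \<open>q - \<phi>(q)\<close> lowers the
  filtration degree. If \<open>v \<in> M\<close> is nonzero of minimal degree, then \<open>(q - \<phi>(q)) v \<in> M\<close>
  has smaller degree and therefore vanishes.
\<close>

definition fa_cons :: "'g \<Rightarrow> 'g fa \<Rightarrow> 'g fa" where
  "fa_cons x f = (\<lambda>zs. case zs of [] \<Rightarrow> 0 | z # zs' \<Rightarrow> if z = x then f zs' else 0)"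

definition fa_word :: "'g list \<Rightarrow> 'g fa" where
  "fa_word w = (\<lambda>zs. if zs = w then 1 else 0)"

definition fa_deg_less :: "nat \<Rightarrow> 'g fa \<Rightarrow> bool" where
  "fa_deg_less n f \<longleftrightarrow> (\<forall>zs. n \<le> length zs \<longrightarrow> f zs = 0)"

definition shift_act :: "('g \<Rightarrow> complex) \<Rightarrow> 'g \<Rightarrow> 'g fa \<Rightarrow> 'g fa" where
  "shift_act \<phi> q f = fa_diff (fa_cons q f) (fa_smul (\<phi> q) f)"

lemma fa_diff_eq_add_smul: "fa_diff a b = fa_add a (fa_smul (-1) b)"
  by (rule ext) (simp add: fa_diff_def fa_add_def fa_smul_def)

lemma fa_mult_cons: "fa_mult (fa_cons x a) h = fa_cons x (fa_mult a h)"
proof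
  fix zs
  show "fa_mult (fa_cons x a) h zs = fa_cons x (fa_mult a h) zs"
    by (cases zs)
      (simp_all add: fa_mult_def fa_cons_def sum.atMost_Suc_shift del: sum.atMost_Suc)
qed

lemma fa_mult_one: "fa_mult fa_one h = h"
proof
  fix zs
  show "fa_mult fa_one h zs = h zs"
    by (cases zs)
      (simp_all add: fa_mult_def fa_one_def sum.atMost_Suc_shift del: sum.atMost_Suc)
qed

lemma fa_mult_diff_left: "fa_mult (fa_diff f g) h = fa_diff (fa_mult f h) (fa_mult g h)"
  by (simp add: fa_mult_def fa_diff_def sum_subtractf left_diff_distrib)

lemma fa_gen_eq_cons_one: "fa_gen x = fa_cons x fa_one"
  by (rule ext) (simp add: fa_gen_def fa_cons_def fa_one_def split: list.split)

lemma fa_mult_gen: "fa_mult (fa_gen x) h = fa_cons x h"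
  by (simp add: fa_gen_eq_cons_one fa_mult_cons fa_mult_one)

lemma fa_word_Nil: "fa_word [] = fa_one"
  by (rule ext) (simp add: fa_word_def fa_one_def)

lemma fa_word_Cons: "fa_word (x # w) = fa_cons x (fa_word w)"
  by (rule ext) (simp add: fa_word_def fa_cons_def split: list.split)

lemma fa_word_elems: "fa_word w \<in> fa_elems"
proof -
  have "{zs. fa_word w zs \<noteq> 0} \<subseteq> {w}" by (auto simp: fa_word_def)
  then show ?thesis unfolding fa_elems_def using finite_subset by blast
qed

lemma fa_one_elems: "fa_one \<in> fa_elems"
  using fa_word_elems[of "[]"] by (simp add: fa_word_Nil)

lemma fa_cons_elems:
  assumes "a \<in> fa_elems"
  shows "fa_cons x a \<in> fa_elems"
proof -
  have "{zs. fa_cons x a zs \<noteq> 0} \<subseteq> (#) x ` {ys. a ys \<noteq> 0}"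
  proof
    fix zs assume "zs \<in> {zs. fa_cons x a zs \<noteq> 0}"
    then show "zs \<in> (#) x ` {ys. a ys \<noteq> 0}"
      by (cases zs) (auto simp: fa_cons_def split: if_splits)
  qed
  moreover have "finite ((#) x ` {ys. a ys \<noteq> 0})"
    using assms by (simp add: fa_elems_def)
  ultimately show ?thesis unfolding fa_elems_def using finite_subset by blast
qed

lemma fa_cons_add: "fa_cons x (fa_add a b) = fa_add (fa_cons x a) (fa_cons x b)"
  by (rule ext) (simp add: fa_cons_def fa_add_def split: list.split)

lemma fa_cons_smul: "fa_cons x (fa_smul c a) = fa_smul c (fa_cons x a)"
  by (rule ext) (simp add: fa_cons_def fa_smul_def split: list.split)

lemma fa_cons_zero: "fa_cons x fa_zero = fa_zero"
  by (rule ext) (simp add: fa_cons_def fa_zero_def split: list.split)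

lemma fa_deg_less_cons: "fa_deg_less n a \<Longrightarrow> fa_deg_less (Suc n) (fa_cons x a)"
  by (auto simp: fa_deg_less_def fa_cons_def split: list.split)

lemma fa_deg_less_word: "fa_deg_less (Suc (length w)) (fa_word w)"
  by (auto simp: fa_deg_less_def fa_word_def)

lemma fa_deg_less_zero: "fa_deg_less 0 f \<Longrightarrow> f = fa_zero"
  by (auto simp: fa_deg_less_def fa_zero_def)

lemma fa_elems_deg_less:
  assumes "f \<in> fa_elems"
  shows "\<exists>n. fa_deg_less n f"
proof -
  let ?S = "{zs. f zs \<noteq> 0}"
  have "finite ?S" using assms by (simp add: fa_elems_def)
  then have "length zs \<le> Max (length ` ?S)" if "f zs \<noteq> 0" for zs
    using that by simp
  then have "fa_deg_less (Suc (Max (length ` ?S))) f"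
    by (meson fa_deg_less_def not_less_eq_eq)
  then show ?thesis ..
qed

lemma fa_deg_less_induct [consumes 2, case_names zero step]:
  assumes "f \<in> fa_elems" and "fa_deg_less n f"
    and zero: "Q fa_zero"
    and step: "\<And>a c w. Q a \<Longrightarrow> length w < n \<Longrightarrow> Q (fa_add a (fa_smul c (fa_word w)))"
  shows "Q f"
proof -
  have "\<forall>f. {zs. f zs \<noteq> 0} \<subseteq> S \<longrightarrow> fa_deg_less n f \<longrightarrow> Q f" if "finite S" for S
    using that
  proof (induction S rule: finite_induct)
    case empty
    then show ?case using zero by (auto simp: fa_zero_def)
  next
    case (insert w S)
    show ?case
    proof (intro allI impI)
      fix f :: "'a fa"
      assume supp: "{zs. f zs \<noteq> 0} \<subseteq> insert w S" and deg: "fa_deg_less n f"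
      have "{zs. (f(w := 0)) zs \<noteq> 0} \<subseteq> S" using supp by auto
      moreover have "fa_deg_less n (f(w := 0))" using deg by (simp add: fa_deg_less_def)
      ultimately have "Q (f(w := 0))" using insert.IH by blast
      moreover have "f = fa_add (f(w := 0)) (fa_smul (f w) (fa_word w))"
        by (rule ext) (simp add: fa_add_def fa_smul_def fa_word_def)
      moreover have "length w < n" if "f w \<noteq> 0"
        using deg that unfolding fa_deg_less_def by (meson not_less)
      ultimately show "Q f"
        using step by (metis fun_upd_triv)
    qed
  qed
  then show ?thesis using assms(1,2) by (simp add: fa_elems_def)
qed

lemma shift_act_add: "shift_act \<phi> q (fa_add a b) = fa_add (shift_act \<phi> q a) (shift_act \<phi> q b)"
  unfolding shift_act_def fa_cons_add
  by (rule ext) (simp add: fa_diff_def fa_add_def fa_smul_def algebra_simps)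

lemma shift_act_smul: "shift_act \<phi> q (fa_smul c a) = fa_smul c (shift_act \<phi> q a)"
  unfolding shift_act_def fa_cons_smul
  by (rule ext) (simp add: fa_diff_def fa_smul_def algebra_simps)

lemma shift_act_zero: "shift_act \<phi> q fa_zero = fa_zero"
  unfolding shift_act_def fa_cons_zero
  by (rule ext) (simp add: fa_diff_def fa_smul_def fa_zero_def)

context
  fixes scale :: "complex \<Rightarrow> 'g::ab_group_add \<Rightarrow> 'g"
    and br :: "'g \<Rightarrow> 'g \<Rightarrow> 'g"
    and P :: "'g set"
    and \<phi> :: "'g \<Rightarrow> complex"
begin

lemma W_ker_cons: "k \<in> W_ker scale br P \<phi> \<Longrightarrow> fa_cons x k \<in> W_ker scale br P \<phi>"
proof (induction rule: W_ker.induct)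
  case zero
  then show ?case by (simp add: fa_cons_zero W_ker.zero)
next
  case (add a b)
  then show ?case by (simp add: fa_cons_add W_ker.add)
next
  case (smul a c)
  then show ?case by (simp add: fa_cons_smul W_ker.smul)
next
  case (rel r a b)
  then show ?case by (metis fa_mult_cons fa_cons_elems W_ker.rel)
next
  case (ind p a)
  then show ?case by (metis fa_mult_cons fa_cons_elems W_ker.ind)
qed

lemma W_ker_commutator:
  assumes "w \<in> fa_elems"
  shows "fa_diff (fa_diff (fa_cons x (fa_cons q w)) (fa_cons q (fa_cons x w))) (fa_cons (br x q) w)
    \<in> W_ker scale br P \<phi>"
proof -
  let ?r = "fa_diff (fa_diff (fa_mult (fa_gen x) (fa_gen q)) (fa_mult (fa_gen q) (fa_gen x)))
              (fa_gen (br x q))"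
  have "?r \<in> U_rels scale br" unfolding U_rels_def by blast
  from W_ker.rel[OF this fa_one_elems assms] show ?thesis
    by (simp add: fa_mult_one fa_mult_diff_left fa_mult_gen fa_mult_cons)
qed

lemma W_ker_shift_act_one:
  assumes "q \<in> P"
  shows "shift_act \<phi> q fa_one \<in> W_ker scale br P \<phi>"
  using W_ker.ind[OF assms fa_one_elems, where scale = scale and br = br and \<phi> = \<phi>]
  by (simp add: shift_act_def fa_gen_eq_cons_one fa_mult_one)

definition deg_less_mod_ker :: "nat \<Rightarrow> 'g fa set" where
  "deg_less_mod_ker n = {fa_add g k | g k. fa_deg_less n g \<and> k \<in> W_ker scale br P \<phi>}"

lemma deg_less_mod_ker_if_W_ker: "k \<in> W_ker scale br P \<phi> \<Longrightarrow> k \<in> deg_less_mod_ker n"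
  unfolding deg_less_mod_ker_def
  by (rule CollectI, rule exI[of _ fa_zero]) (auto simp: fa_zero_def fa_add_def fa_deg_less_def)

lemma deg_less_mod_ker_if_deg_less: "fa_deg_less n g \<Longrightarrow> g \<in> deg_less_mod_ker n"
  unfolding deg_less_mod_ker_def
  by (rule CollectI, rule exI[of _ g], rule exI[of _ fa_zero])
    (auto simp: fa_zero_def fa_add_def W_ker.zero[unfolded fa_zero_def])

lemma deg_less_mod_ker_add:
  assumes "a \<in> deg_less_mod_ker n" "b \<in> deg_less_mod_ker n"
  shows "fa_add a b \<in> deg_less_mod_ker n"
proof -
  obtain g1 k1 g2 k2 where g: "fa_deg_less n g1" "fa_deg_less n g2"
    and k: "k1 \<in> W_ker scale br P \<phi>" "k2 \<in> W_ker scale br P \<phi>"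
    and "a = fa_add g1 k1" "b = fa_add g2 k2"
    using assms unfolding deg_less_mod_ker_def by blast
  then have "fa_add a b = fa_add (fa_add g1 g2) (fa_add k1 k2)"
    by (simp add: fa_add_def add_ac)
  moreover have "fa_deg_less n (fa_add g1 g2)" using g by (simp add: fa_deg_less_def fa_add_def)
  moreover have "fa_add k1 k2 \<in> W_ker scale br P \<phi>" using k by (rule W_ker.add)
  ultimately show ?thesis unfolding deg_less_mod_ker_def by blast
qed

lemma deg_less_mod_ker_smul:
  assumes "a \<in> deg_less_mod_ker n"
  shows "fa_smul c a \<in> deg_less_mod_ker n"
proof -
  obtain g k where g: "fa_deg_less n g" and k: "k \<in> W_ker scale br P \<phi>" and "a = fa_add g k"
    using assms unfolding deg_less_mod_ker_def by blast
  then have "fa_smul c a = fa_add (fa_smul c g) (fa_smul c k)"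
    by (simp add: fa_add_def fa_smul_def algebra_simps)
  moreover have "fa_deg_less n (fa_smul c g)" using g by (simp add: fa_deg_less_def fa_smul_def)
  moreover have "fa_smul c k \<in> W_ker scale br P \<phi>" using k by (rule W_ker.smul)
  ultimately show ?thesis unfolding deg_less_mod_ker_def by blast
qed

lemma deg_less_mod_ker_diff:
  assumes "a \<in> deg_less_mod_ker n" "b \<in> deg_less_mod_ker n"
  shows "fa_diff a b \<in> deg_less_mod_ker n"
  using assms by (simp add: fa_diff_eq_add_smul deg_less_mod_ker_add deg_less_mod_ker_smul)

lemma deg_less_mod_ker_mono:
  "a \<in> deg_less_mod_ker m \<Longrightarrow> m \<le> n \<Longrightarrow> a \<in> deg_less_mod_ker n"
  unfolding deg_less_mod_ker_def fa_deg_less_def by force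

lemma deg_less_mod_ker_cons:
  assumes "a \<in> deg_less_mod_ker n"
  shows "fa_cons x a \<in> deg_less_mod_ker (Suc n)"
proof -
  obtain g k where "fa_deg_less n g" "k \<in> W_ker scale br P \<phi>" "a = fa_add g k"
    using assms unfolding deg_less_mod_ker_def by blast
  then have "fa_deg_less (Suc n) (fa_cons x g)" "fa_cons x k \<in> W_ker scale br P \<phi>"
    and "fa_cons x a = fa_add (fa_cons x g) (fa_cons x k)"
    by (simp_all add: fa_deg_less_cons W_ker_cons fa_cons_add)
  then show ?thesis unfolding deg_less_mod_ker_def by blast
qed

lemma shift_act_word_deg_less_mod_ker:
  assumes "lie_ideal scale br P" and "q \<in> P"
  shows "shift_act \<phi> q (fa_word w) \<in> deg_less_mod_ker (length w)"
  using assms(2)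
proof (induction w arbitrary: q)
  case Nil
  then show ?case by (simp add: fa_word_Nil W_ker_shift_act_one deg_less_mod_ker_if_W_ker)
next
  case (Cons x w)
  let ?b = "br x q" and ?w = "fa_word w"
  let ?C = "fa_diff (fa_diff (fa_cons x (fa_cons q ?w)) (fa_cons q (fa_cons x ?w))) (fa_cons ?b ?w)"
  have "?b \<in> P" using assms(1) Cons.prems by (simp add: lie_ideal_def)
  have "shift_act \<phi> q (fa_word (x # w)) =
      fa_diff (fa_diff (fa_diff (fa_cons x (shift_act \<phi> q ?w)) (shift_act \<phi> ?b ?w))
        (fa_smul (\<phi> ?b) ?w)) ?C"
    by (rule ext)
      (simp add: shift_act_def fa_word_Cons fa_diff_def fa_smul_def fa_cons_def split: list.split)
  moreover have "fa_cons x (shift_act \<phi> q ?w) \<in> deg_less_mod_ker (Suc (length w))"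
    using Cons.IH[OF Cons.prems] by (rule deg_less_mod_ker_cons)
  moreover have "shift_act \<phi> ?b ?w \<in> deg_less_mod_ker (Suc (length w))"
    using Cons.IH[OF \<open>?b \<in> P\<close>] by (rule deg_less_mod_ker_mono) simp
  moreover have "fa_smul (\<phi> ?b) ?w \<in> deg_less_mod_ker (Suc (length w))"
    by (intro deg_less_mod_ker_smul deg_less_mod_ker_if_deg_less fa_deg_less_word)
  moreover have "?C \<in> deg_less_mod_ker (Suc (length w))"
    by (intro deg_less_mod_ker_if_W_ker W_ker_commutator fa_word_elems)
  ultimately show ?case by (simp add: deg_less_mod_ker_diff)
qed

lemma shift_act_deg_less_mod_ker:
  assumes "lie_ideal scale br P" and "q \<in> P"
    and "f \<in> fa_elems" and "fa_deg_less (Suc n) f"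
  shows "shift_act \<phi> q f \<in> deg_less_mod_ker n"
  using assms(3,4)
proof (induction rule: fa_deg_less_induct)
  case zero
  then show ?case by (simp add: shift_act_zero deg_less_mod_ker_if_W_ker W_ker.zero)
next
  case (step a c w)
  have "length w \<le> n" using \<open>length w < Suc n\<close> by simp
  then have "shift_act \<phi> q (fa_word w) \<in> deg_less_mod_ker n"
    by (rule deg_less_mod_ker_mono[OF shift_act_word_deg_less_mod_ker[OF assms(1,2)]])
  with \<open>shift_act \<phi> q a \<in> deg_less_mod_ker n\<close> show ?case
    by (simp add: shift_act_add shift_act_smul deg_less_mod_ker_add deg_less_mod_ker_smul)
qed

lemma shift_act_W_ker_if_minimal_degree:
  assumes "lie_ideal scale br P" and "p \<in> P"
    and "v \<in> fa_elems" and "fa_deg_less (Suc m) v"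
    and "shift_act \<phi> p v \<in> M" and "W_ker scale br P \<phi> \<subseteq> M"
    and M_diff: "\<And>a b. a \<in> M \<Longrightarrow> b \<in> M \<Longrightarrow> fa_diff a b \<in> M"
    and minimal: "\<And>u. u \<in> M \<Longrightarrow> fa_deg_less m u \<Longrightarrow> u \<in> W_ker scale br P \<phi>"
  shows "shift_act \<phi> p v \<in> W_ker scale br P \<phi>"
proof -
  obtain g k where g: "fa_deg_less m g" and k: "k \<in> W_ker scale br P \<phi>"
    and sum: "shift_act \<phi> p v = fa_add g k"
    using shift_act_deg_less_mod_ker[OF assms(1-4)] unfolding deg_less_mod_ker_def by blast
  then have "g = fa_diff (shift_act \<phi> p v) k"
    by (auto simp: fa_diff_def fa_add_def)
  then have "g \<in> M" using M_diff assms(5,6) k by blast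
  then have "g \<in> W_ker scale br P \<phi>" using g by (rule minimal)
  with k sum show ?thesis by (simp add: W_ker.add)
qed

end

theorem proposition3p2:
  fixes scale :: "complex \<Rightarrow> 'g::ab_group_add \<Rightarrow> 'g"
    and br :: "'g \<Rightarrow> 'g \<Rightarrow> 'g"
    and P :: "'g set"
    and \<phi> :: "'g \<Rightarrow> complex"
    and M :: "'g fa set"
  assumes "lie_algebra scale br"
    and "fin_dim scale"
    and "\<not> semisimple_lie scale br"
    and "lie_ideal scale br P"
    and "\<not> perfect_ideal scale br P"
    and "lie_char scale br P \<phi>"
    and "W_ker scale br P \<phi> \<subseteq> M"
    and "M \<subseteq> fa_elems"
    and "\<forall>a\<in>M. \<forall>b\<in>M. fa_add a b \<in> M"
    and "\<forall>c. \<forall>a\<in>M. fa_smul c a \<in> M"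
    and "\<forall>p\<in>P. \<forall>a\<in>M. fa_mult (fa_gen p) a \<in> M"
    and "M \<noteq> W_ker scale br P \<phi>"
  shows "\<exists>v\<in>M. v \<notin> W_ker scale br P \<phi> \<and>
           (\<forall>p\<in>P. fa_diff (fa_mult (fa_gen p) v) (fa_smul (\<phi> p) v) \<in> W_ker scale br P \<phi>)"
proof -
  let ?W = "W_ker scale br P \<phi>"
  have M_diff: "fa_diff a b \<in> M" if "a \<in> M" "b \<in> M" for a b
    using that assms(9,10) by (simp add: fa_diff_eq_add_smul)
  have "\<exists>n. \<exists>v\<in>M. v \<notin> ?W \<and> fa_deg_less n v"
    using assms(7,8,12) fa_elems_deg_less by blast
  then obtain n v where v: "v \<in> M" "v \<notin> ?W" "fa_deg_less n v"
    and minimal: "\<And>m u. m < n \<Longrightarrow> u \<in> M \<Longrightarrow> fa_deg_less m u \<Longrightarrow> u \<in> ?W"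
    unfolding exists_least_iff[of "\<lambda>n. \<exists>v\<in>M. v \<notin> ?W \<and> fa_deg_less n v"] by blast
  obtain m where n: "n = Suc m"
    using v fa_deg_less_zero W_ker.zero by (cases n) blast+
  have "shift_act \<phi> p v \<in> ?W" if "p \<in> P" for p
  proof (rule shift_act_W_ker_if_minimal_degree[OF assms(4) that])
    show "shift_act \<phi> p v \<in> M"
      unfolding shift_act_def fa_mult_gen[symmetric] using M_diff assms(10,11) that v(1) by blast
  qed (use v n assms(7,8) M_diff minimal[of m] in auto)
  with v show ?thesis by (auto simp: shift_act_def fa_mult_gen)
qed

end
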